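(* Let $j>0$ and $R\in(0,1)$. For every $\delta>0$ small enough there is a unique function $\rho:[0,1]\to[0,\infty)$, continuous on $[0,R]$ and vanishing on $(R,1]$, such that $u:=j\delta D_0+\rho$ satisfies $$S^{(\delta,-)}_\delta(u)=u,$$ with cut point $R^{(\delta)}_{G^{\rm neum}_\delta*u}=R$. Moreover, for fixed $\delta$, $\rho$ is (pointwise) an increasing function of $R$.
   Context: $D_0$ is the Dirac delta at $0$. $G^{\rm neum}_t(r,r')$, $r,r'\in[0,1]$, is the Green function of $\partial_t\rho=\frac12\partial_r^2\rho$ on $[0,1]$ with Neumann boundary conditions: $G^{\rm neum}_t(r,r')=\sum_kG_t(r,r'_k)$, $G_t(r,r')=e^{-(r-r')^2/2t}/\sqrt{2\pi t}$, where $r'_k$ ranges over the images of $r'$ under repeated reflections of $[0,1]$ about its endpoints. For $u=cD_0+\rho$ ($c\ge0$, $\rho\in L^\infty([0,1],\mathbb R_+)$), $(G^{\rm neum}_\delta*u)(r)=cG^{\rm neum}_\delta(r,0)+\int_0^1G^{\rm neum}_\delta(r,r')\rho(r')dr'$. For a nonnegative $u$ with total mass $>j\delta$, the cut-and-paste map is $K^{(\delta)}u=j\delta D_0+\mathbf 1_{r\in[0,R^{(\delta)}_u]}u$, where $R^{(\delta)}_u$ is defined by $\int_{R^{(\delta)}_u}^1u(r)dr=j\delta$. Finally $S^{(\delta,-)}_\delta(u)=K^{(\delta)}(G^{\rm neum}_\delta*u)$. *)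

theory Defs
  imports "HOL-Analysis.Analysis"
begin

definition heat_kernel :: "real \<Rightarrow> real \<Rightarrow> real \<Rightarrow> real" where
  "heat_kernel t r r' = exp (- ((r - r')\<^sup>2) / (2 * t)) / sqrt (2 * pi * t)"

text \<open>Neumann Green function on [0,1]: sum over the images of r' under repeated
  reflections about 0 and 1, i.e. the points 2k + r' and 2k - r', k in Z.\<close>
definition green_neum :: "real \<Rightarrow> real \<Rightarrow> real \<Rightarrow> real" where
  "green_neum t r r' =
     (\<Sum>\<^sub>\<infinity> k::int. heat_kernel t r (2 * of_int k + r') + heat_kernel t r (2 * of_int k - r'))"

text \<open>A measure u = c D_0 + rho on [0,1] is represented by the pair (c, rho).
  Convolution with the Neumann Green function.\<close>
definition conv_neum :: "real \<Rightarrow> real \<times> (real \<Rightarrow> real) \<Rightarrow> real \<Rightarrow> real" where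
  "conv_neum t u r = fst u * green_neum t r 0
      + integral {0..1} (\<lambda>r'. green_neum t r r' * snd u r')"

definition cut_point :: "real \<Rightarrow> (real \<Rightarrow> real) \<Rightarrow> real" where
  "cut_point a f = (THE R. R \<in> {0..1} \<and> integral {R..1} f = a)"

definition cut_paste :: "real \<Rightarrow> (real \<Rightarrow> real) \<Rightarrow> real \<times> (real \<Rightarrow> real)" where
  "cut_paste a f = (a, (\<lambda>r. if r \<in> {0..cut_point a f} then f r else 0))"

definition S_minus :: "real \<Rightarrow> real \<Rightarrow> real \<times> (real \<Rightarrow> real) \<Rightarrow> real \<times> (real \<Rightarrow> real)" where
  "S_minus j \<delta> u = cut_paste (j * \<delta>) (conv_neum \<delta> u)"

definition fixed_profile :: "real \<Rightarrow> real \<Rightarrow> real \<Rightarrow> (real \<Rightarrow> real) \<Rightarrow> bool" where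
  "fixed_profile j \<delta> R \<rho> \<longleftrightarrow>
     (\<forall>r\<in>{0..1}. 0 \<le> \<rho> r)
   \<and> continuous_on {0..R} \<rho>
   \<and> (\<forall>r\<in>{R<..1}. \<rho> r = 0)
   \<and> integral {0..1} (conv_neum \<delta> (j * \<delta>, \<rho>)) > j * \<delta>
   \<and> cut_point (j * \<delta>) (conv_neum \<delta> (j * \<delta>, \<rho>)) = R
   \<and> fst (S_minus j \<delta> (j * \<delta>, \<rho>)) = j * \<delta>
   \<and> (\<forall>r\<in>{0..1}. snd (S_minus j \<delta> (j * \<delta>, \<rho>)) r = \<rho> r)"

end

theory Submission
  imports Defs "HOL-Probability.Distributions" "HOL-Real_Asymp.Real_Asymp"
begin

text \<open>For \<open>r \<le> R\<close> the fixed-point condition is the linear integral equation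
  \<open>\<rho> = j\<delta> G(\<cdot>,0) + \<integral>\<^sub>0\<^sup>R G(\<cdot>,r') \<rho>(r') dr'\<close>. The Neumann Green function is bounded below
  by the free kernel at distance 1 and integrates to 1 in each variable, so the integral operator on
  \<open>[0,R]\<close> has norm at most \<open>1 - G\<^sub>\<delta>(1) (1 - R) < 1\<close>. Banach's theorem gives a unique continuous
  solution, and the same bound gives a minimum principle, which yields positivity and monotonicity
  in \<open>R\<close>: enlarging \<open>R\<close> only adds a nonnegative term. Finally, mass conservation shows that
  \<open>G * u\<close> carries mass exactly \<open>j\<delta>\<close> beyond \<open>R\<close>, so \<open>R\<close> is the cut point.\<close>

section \<open>The Gaussian kernel\<close>

definition gauss_kernel :: "real \<Rightarrow> real \<Rightarrow> real" where
  "gauss_kernel t s = exp (- (s\<^sup>2) / (2 * t)) / sqrt (2 * pi * t)"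

lemma heat_kernel_eq_gauss_kernel: "heat_kernel t r r' = gauss_kernel t (r - r')"
  by (simp add: heat_kernel_def gauss_kernel_def)

lemma gauss_kernel_pos: "0 < t \<Longrightarrow> 0 < gauss_kernel t s"
  by (simp add: gauss_kernel_def)

lemma gauss_kernel_nonneg: "0 < t \<Longrightarrow> 0 \<le> gauss_kernel t s"
  using gauss_kernel_pos less_imp_le by blast

lemma gauss_kernel_minus [simp]: "gauss_kernel t (- s) = gauss_kernel t s"
  by (simp add: gauss_kernel_def)

lemma gauss_kernel_antimono: "0 < t \<Longrightarrow> \<bar>s\<bar> \<le> \<bar>s'\<bar> \<Longrightarrow> gauss_kernel t s' \<le> gauss_kernel t s"
  unfolding gauss_kernel_def
  by (intro divide_right_mono) (auto simp: divide_right_mono abs_le_square_iff)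

lemma continuous_on_gauss_kernel [continuous_intros]:
  "0 < t \<Longrightarrow> continuous_on A f \<Longrightarrow> continuous_on A (\<lambda>x. gauss_kernel t (f x))"
  unfolding gauss_kernel_def by (intro continuous_intros) auto

lemma gauss_kernel_integrable_on: "0 < t \<Longrightarrow> gauss_kernel t integrable_on {a..b}"
  by (intro integrable_continuous_interval continuous_on_gauss_kernel continuous_on_id)

lemma gauss_kernel_has_integral:
  assumes t: "0 < t"
  shows "(gauss_kernel t has_integral 1) UNIV"
proof -
  have "gauss_kernel t = normal_density 0 (sqrt t)"
    using t by (auto simp: fun_eq_iff gauss_kernel_def normal_density_def)
  then show ?thesis
    using has_integral_integral_lborel[OF integrable_normal_density[of "sqrt t" 0]]
      integral_normal_density[of "sqrt t" 0] t by simp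
qed

lemma tendsto_integral_gauss_kernel:
  assumes t: "0 < t" and a: "filterlim a at_bot F" and b: "filterlim b at_top F"
  shows "((\<lambda>n. integral {a n..b n} (gauss_kernel t)) \<longlongrightarrow> 1) F"
proof (rule tendstoI)
  fix e :: real assume "0 < e"
  then obtain B where "0 < B" and B: "\<And>u v. ball 0 B \<subseteq> {u..v} \<Longrightarrow> dist (integral {u..v} (gauss_kernel t)) 1 < e"
    using gauss_kernel_has_integral[OF t] unfolding has_integral_alt'
    by (force simp: cbox_interval dist_norm)
  have "eventually (\<lambda>n. a n \<le> - B) F" "eventually (\<lambda>n. B \<le> b n) F"
    using a b by (simp_all add: filterlim_at_bot filterlim_at_top)
  then show "eventually (\<lambda>n. dist (integral {a n..b n} (gauss_kernel t)) 1 < e) F"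
    by eventually_elim (intro B, auto simp: dist_real_def)
qed

lemma integral_shifted_gauss_kernel:
  "integral {0..1} (\<lambda>r. gauss_kernel t (r - c)) = integral {- c..1 - c} (gauss_kernel t)"
  using integral_shift_real_ivl[of "- c" "- c" "1 - c" "gauss_kernel t"] by simp

lemma sum_integral_adjacent_intervals:
  fixes f :: "real \<Rightarrow> real"
  assumes f: "\<And>u v. f integrable_on {u..v}"
  shows "(\<Sum>k\<in>{- int N..int N}. integral {2 * of_int k - c - 1..2 * of_int k - c + 1} f)
           = integral {- 2 * real N - c - 1..2 * real N - c + 1} f"
proof (induction N)
  case (Suc N)
  define F where "F k = integral {2 * of_int k - c - 1..2 * of_int k - c + 1} f" for k :: int
  have "{- int (Suc N)..int (Suc N)} = insert (int (Suc N)) (insert (- int (Suc N)) {- int N..int N})"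
    by auto
  then have "(\<Sum>k\<in>{- int (Suc N)..int (Suc N)}. F k) = F (int (Suc N)) + F (- int (Suc N)) + sum F {- int N..int N}"
    by simp
  also have "F (int (Suc N)) = integral {2 * real N - c + 1..2 * real (Suc N) - c + 1} f"
    unfolding F_def by (intro arg_cong2[where f="\<lambda>a b. integral {a..b} f"]) auto
  also have "F (- int (Suc N)) = integral {- 2 * real (Suc N) - c - 1..- 2 * real N - c - 1} f"
    unfolding F_def by (intro arg_cong2[where f="\<lambda>a b. integral {a..b} f"]) auto
  also have "sum F {- int N..int N} = integral {- 2 * real N - c - 1..2 * real N - c + 1} f"
    unfolding F_def by (rule Suc.IH)
  also have "integral {2 * real N - c + 1..2 * real (Suc N) - c + 1} f
             + integral {- 2 * real (Suc N) - c - 1..- 2 * real N - c - 1} f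
             + integral {- 2 * real N - c - 1..2 * real N - c + 1} f
           = integral {- 2 * real (Suc N) - c - 1..2 * real (Suc N) - c + 1} f"
    using Henstock_Kurzweil_Integration.integral_combine[where a="- 2 * real (Suc N) - c - 1"
            and c="- 2 * real N - c - 1" and b="2 * real N - c + 1" and f=f]
      Henstock_Kurzweil_Integration.integral_combine[where a="- 2 * real (Suc N) - c - 1"
            and c="2 * real N - c + 1" and b="2 * real (Suc N) - c + 1" and f=f] f
    by simp
  finally show ?case
    unfolding F_def .
qed simp

section \<open>The Neumann Green function\<close>

lemma summable_on_int:
  fixes f :: "int \<Rightarrow> real"
  assumes "(\<lambda>n. f (int n)) summable_on UNIV" and "(\<lambda>n. f (- int n)) summable_on UNIV"
  shows "f summable_on UNIV"
proof -
  have "f summable_on range int" "f summable_on range (\<lambda>n. - int n)"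
    using assms by (simp_all add: summable_on_reindex inj_on_def o_def)
  moreover have "UNIV = range int \<union> range (\<lambda>n. - int n)"
  proof -
    have "x = int (nat x) \<or> x = - int (nat (- x))" for x
      by (cases "0 \<le> x") auto
    then show ?thesis
      by blast
  qed
  ultimately show ?thesis
    by (metis summable_on_union)
qed

definition green_term :: "real \<Rightarrow> int \<Rightarrow> real \<Rightarrow> real \<Rightarrow> real" where
  "green_term t k r r' = heat_kernel t r (2 * of_int k + r') + heat_kernel t r (2 * of_int k - r')"

lemma green_neum_eq_infsum: "green_neum t r r' = (\<Sum>\<^sub>\<infinity>k. green_term t k r r')"
  by (simp add: green_neum_def green_term_def)

lemma green_term_nonneg: "0 < t \<Longrightarrow> 0 \<le> green_term t k r r'"
  by (simp add: green_term_def heat_kernel_eq_gauss_kernel gauss_kernel_nonneg add_nonneg_nonneg)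

lemma square_ge_image_distance:
  fixes k :: int and s :: real
  assumes "\<bar>s + 2 * of_int k\<bar> \<le> 2"
  shows "4 * \<bar>of_int k\<bar> - 5 \<le> s\<^sup>2"
proof -
  have "2 * \<bar>of_int k\<bar> - 2 \<le> \<bar>s\<bar>"
    using assms by linarith
  moreover have "2 * \<bar>s\<bar> - 1 \<le> s\<^sup>2"
    using zero_le_power2[of "\<bar>s\<bar> - 1"] unfolding power2_diff power2_abs by simp
  ultimately show ?thesis by linarith
qed

definition image_bound :: "real \<Rightarrow> int \<Rightarrow> real" where
  "image_bound t k = exp (5 / (2 * t)) / sqrt (2 * pi * t) * exp (- 2 / t) ^ nat \<bar>k\<bar>"

lemma gauss_kernel_le_image_bound:
  assumes t: "0 < t" and s: "\<bar>s + 2 * of_int k\<bar> \<le> 2"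
  shows "gauss_kernel t s \<le> image_bound t k"
proof -
  have "- (s\<^sup>2) / (2 * t) \<le> (5 - 4 * \<bar>of_int k\<bar>) / (2 * t)"
    using square_ge_image_distance[OF s] t by (intro divide_right_mono) auto
  also have "\<dots> = 5 / (2 * t) + real (nat \<bar>k\<bar>) * (- 2 / t)"
    using t by (simp add: field_simps)
  finally have "exp (- (s\<^sup>2) / (2 * t)) \<le> exp (5 / (2 * t) + real (nat \<bar>k\<bar>) * (- 2 / t))"
    by (simp only: exp_le_cancel_iff)
  also have "\<dots> = exp (5 / (2 * t)) * exp (- 2 / t) ^ nat \<bar>k\<bar>"
    by (simp only: exp_add exp_of_nat_mult)
  finally show ?thesis
    unfolding gauss_kernel_def image_bound_def using t by (simp add: divide_right_mono)
qed

lemma summable_image_bound: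
  assumes t: "0 < t"
  shows "image_bound t summable_on UNIV"
  unfolding image_bound_def
proof (intro summable_on_cmult_right summable_on_int)
  have "(\<lambda>n. exp (- 2 / t) ^ n) summable_on UNIV"
    using t by (intro summable_nonneg_imp_summable_on) auto
  then show "(\<lambda>n. exp (- 2 / t) ^ nat \<bar>int n\<bar>) summable_on UNIV"
    and "(\<lambda>n. exp (- 2 / t) ^ nat \<bar>- int n\<bar>) summable_on UNIV"
    by simp_all
qed

lemma green_term_le:
  assumes t: "0 < t" and r: "r \<in> {0..1}" and r': "r' \<in> {0..1}"
  shows "green_term t k r r' \<le> 2 * image_bound t k"
proof -
  have "gauss_kernel t (r - (2 * of_int k + r')) \<le> image_bound t k"
    by (rule gauss_kernel_le_image_bound[OF t]) (use r r' in auto)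
  moreover have "gauss_kernel t (r - (2 * of_int k - r')) \<le> image_bound t k"
    by (rule gauss_kernel_le_image_bound[OF t]) (use r r' in auto)
  ultimately show ?thesis
    unfolding green_term_def heat_kernel_eq_gauss_kernel by linarith
qed

lemma summable_green_term:
  assumes t: "0 < t" and r: "r \<in> {0..1}" and r': "r' \<in> {0..1}"
  shows "(\<lambda>k. green_term t k r r') summable_on UNIV"
  by (rule summable_on_comparison_test[OF summable_on_cmult_right[OF summable_image_bound[OF t]]])
     (use green_term_le[OF t r r'] green_term_nonneg[OF t] in auto)

lemma uniform_limit_green_neum:
  assumes t: "0 < t" and fg: "\<And>y. y \<in> S \<Longrightarrow> f y \<in> {0..1} \<and> g y \<in> {0..1}"
  shows "uniform_limit S (\<lambda>X y. \<Sum>k\<in>X. green_term t k (f y) (g y)) (\<lambda>y. green_neum t (f y) (g y))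
           (finite_subsets_at_top UNIV)"
  unfolding green_neum_eq_infsum
  by (rule Weierstrass_m_test_general[OF _ summable_on_cmult_right[OF summable_image_bound[OF t]]])
     (use fg green_term_le[OF t] green_term_nonneg[OF t] in auto)

lemma continuous_on_green_neum:
  assumes t: "0 < t" and "continuous_on S f" "continuous_on S g"
    and "\<And>y. y \<in> S \<Longrightarrow> f y \<in> {0..1} \<and> g y \<in> {0..1}"
  shows "continuous_on S (\<lambda>y. green_neum t (f y) (g y))"
  by (rule uniform_limit_theorem[OF _ uniform_limit_green_neum])
     (use assms in \<open>auto intro!: always_eventually continuous_on_sum continuous_intros
                         simp: green_term_def heat_kernel_eq_gauss_kernel\<close>)

lemma green_neum_nonneg: "0 < t \<Longrightarrow> 0 \<le> green_neum t r r'"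
  unfolding green_neum_eq_infsum by (intro infsum_nonneg green_term_nonneg)

lemma green_neum_ge:
  assumes t: "0 < t" and r: "r \<in> {0..1}" and r': "r' \<in> {0..1}"
  shows "gauss_kernel t 1 \<le> green_neum t r r'"
proof -
  have "gauss_kernel t 1 \<le> gauss_kernel t (r - r')"
    using r r' by (intro gauss_kernel_antimono t) auto
  also have "\<dots> \<le> green_term t 0 r r'"
    using gauss_kernel_nonneg[OF t] by (simp add: green_term_def heat_kernel_eq_gauss_kernel)
  also have "\<dots> = (\<Sum>\<^sub>\<infinity>k\<in>{0}. green_term t k r r')"
    by simp
  also have "\<dots> \<le> green_neum t r r'"
    unfolding green_neum_eq_infsum
    by (rule infsum_mono2) (use summable_green_term[OF t r r'] green_term_nonneg[OF t] in auto)
  finally show ?thesis .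
qed

lemma green_neum_sym:
  assumes t: "0 < t" and r: "r \<in> {0..1}" and r': "r' \<in> {0..1}"
  shows "green_neum t r' r = green_neum t r r'"
proof -
  define a where "a k = gauss_kernel t (r - 2 * of_int k - r')" for k :: int
  define b where "b k = gauss_kernel t (r - 2 * of_int k + r')" for k :: int
  have a: "a summable_on UNIV" and b: "b summable_on UNIV"
    by (rule summable_on_comparison_test[OF summable_green_term[OF t r r']];
        simp add: a_def b_def green_term_def heat_kernel_eq_gauss_kernel gauss_kernel_nonneg[OF t] algebra_simps)+
  have "heat_kernel t r' (2 * of_int k + r) = a (- k)" for k
    using gauss_kernel_minus[of t "r' - (2 * of_int k + r)"]
    by (simp add: a_def heat_kernel_eq_gauss_kernel algebra_simps)
  moreover have "heat_kernel t r' (2 * of_int k - r) = b k" for k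
    by (simp add: b_def heat_kernel_eq_gauss_kernel algebra_simps)
  ultimately have "green_neum t r' r = (\<Sum>\<^sub>\<infinity>k. a (- k) + b k)"
    unfolding green_neum_def by simp
  also have "\<dots> = (\<Sum>\<^sub>\<infinity>k. a (- k)) + (\<Sum>\<^sub>\<infinity>k. b k)"
    by (rule infsum_add[OF _ b]) (use summable_on_reindex_bij_betw[OF bij_uminus, of a] a in simp)
  also have "(\<Sum>\<^sub>\<infinity>k. a (- k)) = (\<Sum>\<^sub>\<infinity>k. a k)"
    by (rule infsum_reindex_bij_betw[OF bij_uminus])
  also have "(\<Sum>\<^sub>\<infinity>k. a k) + (\<Sum>\<^sub>\<infinity>k. b k) = (\<Sum>\<^sub>\<infinity>k. a k + b k)"
    by (rule infsum_add[OF a b, symmetric])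
  also have "\<dots> = green_neum t r r'"
    unfolding green_neum_def heat_kernel_eq_gauss_kernel a_def b_def
    by (intro infsum_cong) (simp add: algebra_simps)
  finally show ?thesis .
qed

lemma integral_green_term:
  assumes t: "0 < t"
  shows "integral {0..1} (\<lambda>r. green_term t k r x)
           = integral {- (2 * of_int k + x)..1 - (2 * of_int k + x)} (gauss_kernel t)
             + integral {2 * of_int k - x - 1..2 * of_int k - x} (gauss_kernel t)"
proof -
  have "integral {0..1} (\<lambda>r. green_term t k r x)
          = integral {0..1} (\<lambda>r. gauss_kernel t (r - (2 * of_int k + x)))
            + integral {0..1} (\<lambda>r. gauss_kernel t (r - (2 * of_int k - x)))"
    unfolding green_term_def heat_kernel_eq_gauss_kernel
    by (intro integral_add integrable_continuous_interval continuous_intros t)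
  also have "integral {0..1} (\<lambda>r. gauss_kernel t (r - (2 * of_int k + x)))
               = integral {- (2 * of_int k + x)..1 - (2 * of_int k + x)} (gauss_kernel t)"
    by (rule integral_shifted_gauss_kernel)
  also have "integral {0..1} (\<lambda>r. gauss_kernel t (r - (2 * of_int k - x)))
               = integral {- (2 * of_int k - x)..- (2 * of_int k - x - 1)} (\<lambda>s. gauss_kernel t (- s))"
    by (simp add: integral_shifted_gauss_kernel)
  also have "\<dots> = integral {2 * of_int k - x - 1..2 * of_int k - x} (gauss_kernel t)"
    by (rule Henstock_Kurzweil_Integration.integral_reflect_real)
  finally show ?thesis .
qed

lemma integral_green_partial_sum:
  assumes t: "0 < t"
  shows "integral {0..1} (\<lambda>r. \<Sum>k\<in>{- int N..int N}. green_term t k r x)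
           = integral {- 2 * real N - x - 1..2 * real N - x + 1} (gauss_kernel t)"
proof -
  \<comment> \<open>After reflecting the first family of images, the two families of intervals interlace and
    tile \<open>[-2N-1-x, 2N+1-x]\<close>.\<close>
  have reflect: "(\<Sum>k\<in>{- int N..int N}. integral {- (2 * of_int k + x)..1 - (2 * of_int k + x)} (gauss_kernel t))
      = (\<Sum>k\<in>{- int N..int N}. integral {2 * of_int k - x..2 * of_int k - x + 1} (gauss_kernel t))"
    by (rule sum.reindex_bij_witness[of _ uminus uminus])
       (auto intro!: arg_cong2[where f="\<lambda>a b. integral {a..b} (gauss_kernel t)"])
  have "integral {0..1} (\<lambda>r. \<Sum>k\<in>{- int N..int N}. green_term t k r x)
          = (\<Sum>k\<in>{- int N..int N}. integral {- (2 * of_int k + x)..1 - (2 * of_int k + x)} (gauss_kernel t)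
                                  + integral {2 * of_int k - x - 1..2 * of_int k - x} (gauss_kernel t))"
    unfolding integral_green_term[OF t, symmetric]
    by (intro integral_sum integrable_continuous_interval continuous_intros finite_atLeastAtMost_int)
       (auto simp: green_term_def heat_kernel_eq_gauss_kernel t intro!: continuous_intros)
  also have "\<dots> = (\<Sum>k\<in>{- int N..int N}. integral {2 * of_int k - x..2 * of_int k - x + 1} (gauss_kernel t)
                                  + integral {2 * of_int k - x - 1..2 * of_int k - x} (gauss_kernel t))"
    unfolding sum.distrib reflect ..
  also have "\<dots> = (\<Sum>k\<in>{- int N..int N}. integral {2 * of_int k - x - 1..2 * of_int k - x + 1} (gauss_kernel t))"
    by (intro sum.cong refl, subst add.commute, rule Henstock_Kurzweil_Integration.integral_combine)
       (auto intro: gauss_kernel_integrable_on t)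
  also have "\<dots> = integral {- 2 * real N - x - 1..2 * real N - x + 1} (gauss_kernel t)"
    using t by (intro sum_integral_adjacent_intervals gauss_kernel_integrable_on)
  finally show ?thesis .
qed

lemma integral_green_neum:
  assumes t: "0 < t" and x: "x \<in> {0..1}"
  shows "integral {0..1} (\<lambda>r. green_neum t r x) = 1"
proof -
  obtain I J where I: "\<And>X. ((\<lambda>r. \<Sum>k\<in>X. green_term t k r x) has_integral I X) {0..1}"
    and J: "((\<lambda>r. green_neum t r x) has_integral J) {0..1}"
    and lim: "(I \<longlongrightarrow> J) (finite_subsets_at_top UNIV)"
    by (rule uniform_limit_integral[OF uniform_limit_green_neum[OF t, of "{0..1}" "\<lambda>r. r" "\<lambda>r. x"]])
       (use x in \<open>auto intro!: continuous_on_sum continuous_intros t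
                   simp: green_term_def heat_kernel_eq_gauss_kernel\<close>)
  have "filterlim (uminus :: int \<Rightarrow> int) at_bot at_top"
    by (simp add: filterlim_at_bot minus_le_iff)
  then have "filterlim (\<lambda>N::nat. {- int N..int N}) (finite_subsets_at_top UNIV) sequentially"
    by (intro filterlim_atLeastAtMost_at_bot_at_top filterlim_compose[OF _ filterlim_int_sequentially]
              filterlim_int_sequentially) auto
  then have "(\<lambda>N. I {- int N..int N}) \<longlonglongrightarrow> J"
    by (rule filterlim_compose[OF lim])
  moreover have "I {- int N..int N} = integral {- 2 * real N - x - 1..2 * real N - x + 1} (gauss_kernel t)" for N
    using integral_unique[OF I] integral_green_partial_sum[OF t] by metis
  moreover have "(\<lambda>N. integral {- 2 * real N - x - 1..2 * real N - x + 1} (gauss_kernel t)) \<longlonglongrightarrow> 1"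
    by (rule tendsto_integral_gauss_kernel[OF t]) real_asymp+
  ultimately have "J = 1"
    using LIMSEQ_unique by auto
  then show ?thesis
    using J by (simp add: integral_unique)
qed

lemma integral_green_neum':
  "0 < t \<Longrightarrow> x \<in> {0..1} \<Longrightarrow> integral {0..1} (\<lambda>r'. green_neum t x r') = 1"
  using integral_green_neum[of t x] green_neum_sym[of t _ x]
  by (metis (no_types, lifting) integral_cong)

section \<open>The integral operator on \<open>[0,R]\<close>\<close>

definition green_integral :: "real \<Rightarrow> real \<Rightarrow> (real \<Rightarrow> real) \<Rightarrow> real \<Rightarrow> real" where
  "green_integral t R \<rho> r = integral {0..R} (\<lambda>r'. green_neum t r r' * \<rho> r')"

lemma integrable_green_neum_mult:
  assumes t: "0 < t" and r: "r \<in> {0..1}" and ab: "0 \<le> a" "b \<le> 1" and \<rho>: "continuous_on {a..b} \<rho>"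
  shows "(\<lambda>r'. green_neum t r r' * \<rho> r') integrable_on {a..b}"
  by (intro integrable_continuous_interval continuous_intros continuous_on_green_neum \<rho> t)
     (use r ab in auto)

lemma continuous_on_green_integral:
  assumes t: "0 < t" and R: "R \<le> 1" and \<rho>: "continuous_on {0..R} \<rho>"
  shows "continuous_on {0..1} (green_integral t R \<rho>)"
proof -
  have "continuous_on ({0..1} \<times> {0..R}) (\<lambda>y. green_neum t (fst y) (snd y) * \<rho> (snd y))"
    by (intro continuous_intros continuous_on_green_neum t continuous_on_compose2[OF \<rho>])
       (use R in auto)
  then have "continuous_on ({0..1} \<times> cbox 0 R) (\<lambda>(r, r'). green_neum t r r' * \<rho> r')"
    by (simp add: case_prod_beta cbox_interval)
  from integral_continuous_on_param[OF this] show ?thesis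
    unfolding green_integral_def by (simp add: cbox_interval)
qed

lemma green_integral_mono:
  assumes t: "0 < t" and R: "R \<le> 1" and r: "r \<in> {0..1}"
    and f: "continuous_on {0..R} f" and g: "continuous_on {0..R} g"
    and le: "\<And>r'. r' \<in> {0..R} \<Longrightarrow> f r' \<le> g r'"
  shows "green_integral t R f r \<le> green_integral t R g r"
  unfolding green_integral_def
  by (intro integral_le integrable_green_neum_mult t r f g R mult_left_mono le green_neum_nonneg) auto

lemma green_integral_diff:
  assumes t: "0 < t" and R: "R \<le> 1" and r: "r \<in> {0..1}"
    and f: "continuous_on {0..R} f" and g: "continuous_on {0..R} g"
  shows "green_integral t R (\<lambda>r'. f r' - g r') r = green_integral t R f r - green_integral t R g r"
  unfolding green_integral_def right_diff_distrib
  by (intro integral_diff integrable_green_neum_mult t r f g R) auto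

lemma green_integral_mono_interval:
  assumes t: "0 < t" and R: "0 \<le> R1" "R1 \<le> R2" "R2 \<le> 1" and r: "r \<in> {0..1}"
    and \<rho>: "continuous_on {0..R2} \<rho>" and nonneg: "\<And>r'. r' \<in> {R1..R2} \<Longrightarrow> 0 \<le> \<rho> r'"
  shows "green_integral t R1 \<rho> r \<le> green_integral t R2 \<rho> r"
proof -
  have "green_integral t R1 \<rho> r + integral {R1..R2} (\<lambda>r'. green_neum t r r' * \<rho> r')
          = green_integral t R2 \<rho> r"
    unfolding green_integral_def using R
    by (intro Henstock_Kurzweil_Integration.integral_combine integrable_green_neum_mult t r \<rho>) auto
  moreover have "0 \<le> integral {R1..R2} (\<lambda>r'. green_neum t r r' * \<rho> r')"
    using R nonneg r continuous_on_subset[OF \<rho>]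
    by (intro integral_nonneg integrable_green_neum_mult t mult_nonneg_nonneg green_neum_nonneg) auto
  ultimately show ?thesis
    by linarith
qed

definition green_norm_bound :: "real \<Rightarrow> real \<Rightarrow> real" where
  "green_norm_bound t R = 1 - gauss_kernel t 1 * (1 - R)"

lemma green_norm_bound_less_1: "0 < t \<Longrightarrow> R < 1 \<Longrightarrow> green_norm_bound t R < 1"
  by (simp add: green_norm_bound_def gauss_kernel_pos)

lemma integral_green_neum_le:
  assumes t: "0 < t" and R: "0 \<le> R" "R \<le> 1" and r: "r \<in> {0..1}"
  shows "integral {0..R} (\<lambda>r'. green_neum t r r') \<le> green_norm_bound t R"
proof -
  have int: "(\<lambda>r'. green_neum t r r') integrable_on {0..1}"
    using integrable_green_neum_mult[OF t r, of 0 1 "\<lambda>_. 1"] by simp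
  have "integral {0..R} (\<lambda>r'. green_neum t r r') + integral {R..1} (\<lambda>r'. green_neum t r r') = 1"
    using Henstock_Kurzweil_Integration.integral_combine[OF R int] integral_green_neum'[OF t r] by simp
  moreover have "(1 - R) * gauss_kernel t 1 \<le> integral {R..1} (\<lambda>r'. green_neum t r r')"
    using integral_le[of "\<lambda>_. gauss_kernel t 1" "{R..1}" "\<lambda>r'. green_neum t r r'"]
      integrable_on_subinterval[OF int, of R 1] green_neum_ge[OF t r] R by auto
  ultimately show ?thesis
    by (simp add: green_norm_bound_def algebra_simps)
qed

lemma green_norm_bound_nonneg:
  assumes t: "0 < t" and R: "0 \<le> R" "R \<le> 1"
  shows "0 \<le> green_norm_bound t R"
proof -
  have "0 \<le> integral {0..R} (\<lambda>r'. green_neum t 0 r')"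
    using integrable_green_neum_mult[OF t _ _ _ continuous_on_const, of 0 0 R 1] R
    by (intro integral_nonneg green_neum_nonneg t) auto
  also have "\<dots> \<le> green_norm_bound t R"
    using R by (intro integral_green_neum_le t) auto
  finally show ?thesis .
qed

lemma green_integral_contraction:
  assumes t: "0 < t" and R: "0 \<le> R" "R \<le> 1" and r: "r \<in> {0..1}"
    and f: "continuous_on {0..R} f" and g: "continuous_on {0..R} g"
    and close: "\<And>r'. r' \<in> {0..R} \<Longrightarrow> \<bar>f r' - g r'\<bar> \<le> e"
  shows "\<bar>green_integral t R f r - green_integral t R g r\<bar> \<le> green_norm_bound t R * e"
proof -
  define d where "d r' = f r' - g r'" for r'
  have d: "continuous_on {0..R} d"
    unfolding d_def by (intro continuous_intros f g)
  have d_bounds: "- e \<le> d r' \<and> d r' \<le> e" if "r' \<in> {0..R}" for r'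
    using close[OF that] by (simp add: d_def abs_le_iff)
  have "0 \<le> e"
    using close[of 0] R by force
  have "green_integral t R d r \<le> green_integral t R (\<lambda>_. e) r"
    by (rule green_integral_mono[OF t R(2) r d continuous_on_const]) (use d_bounds in auto)
  moreover have "green_integral t R (\<lambda>_. - e) r \<le> green_integral t R d r"
    by (rule green_integral_mono[OF t R(2) r continuous_on_const d]) (use d_bounds in auto)
  ultimately have "\<bar>green_integral t R d r\<bar> \<le> integral {0..R} (\<lambda>r'. green_neum t r r') * e"
    by (auto simp: green_integral_def abs_le_iff)
  also have "\<dots> \<le> green_norm_bound t R * e"
    using integral_green_neum_le[OF t R r] \<open>0 \<le> e\<close> by (rule mult_right_mono)
  finally show ?thesis
    unfolding d_def using green_integral_diff[OF t R(2) r f g] by simp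
qed

lemma green_supersolution_nonneg:
  assumes t: "0 < t" and R: "0 \<le> R" "R < 1" and D: "continuous_on {0..R} D"
    and super: "\<And>r. r \<in> {0..R} \<Longrightarrow> green_integral t R D r \<le> D r"
    and r: "r \<in> {0..R}"
  shows "0 \<le> D r"
proof (rule ccontr)
  assume "\<not> 0 \<le> D r"
  obtain r0 where r0: "r0 \<in> {0..R}" and min: "\<And>r'. r' \<in> {0..R} \<Longrightarrow> D r0 \<le> D r'"
    using continuous_attains_inf[OF compact_Icc _ D] R by auto
  define m where "m = D r0"
  define K where "K = integral {0..R} (\<lambda>r'. green_neum t r0 r')"
  have "m < 0"
    using min[OF r] \<open>\<not> 0 \<le> D r\<close> by (simp add: m_def)
  have r0': "r0 \<in> {0..1}"
    using r0 R by auto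
  have "K < 1"
    unfolding K_def using integral_green_neum_le[OF t R(1) _ r0'] green_norm_bound_less_1[OF t R(2)] R
    by simp
  have "K * m = green_integral t R (\<lambda>_. m) r0"
    by (simp add: green_integral_def K_def)
  also have "\<dots> \<le> green_integral t R D r0"
    using R r0' min by (intro green_integral_mono t D) (auto simp: m_def)
  also have "\<dots> \<le> m"
    using super[OF r0] by (simp add: m_def)
  finally show False
    using \<open>K < 1\<close> \<open>m < 0\<close> by (simp add: mult_le_cancel_right2)
qed

lemma exists_green_fixed_point:
  assumes t: "0 < t" and R: "0 \<le> R" "R < 1" and h: "continuous_on {0..R} h"
  shows "\<exists>\<rho>. continuous_on {0..R} \<rho> \<and> (\<forall>r\<in>{0..R}. \<rho> r = h r + green_integral t R \<rho> r)"
proof -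
  \<comment> \<open>Banach's theorem is applied in the space of bounded continuous functions on the whole line;
    precomposing with the clamp onto \<open>[0,R]\<close> makes the operator a self-map of that space.\<close>
  define clamp where "clamp r = max 0 (min R r)" for r :: real
  have clamp: "clamp r \<in> {0..R}" for r
    using R by (auto simp: clamp_def)
  define \<Psi> where "\<Psi> g r = h r + green_integral t R (apply_bcontfun g) r" for g r
  have continuous_\<Psi>: "continuous_on {0..R} (\<Psi> g)" for g
    unfolding \<Psi>_def using R
    by (intro continuous_intros h continuous_on_subset[OF continuous_on_green_integral[OF t]])
       (auto intro: continuous_on_apply_bcontfun)
  have bcontfun_\<Psi>: "(\<lambda>r. \<Psi> g (clamp r)) \<in> bcontfun" for g
  proof -
    have "bounded (\<Psi> g ` {0..R})"
      by (intro compact_imp_bounded compact_continuous_image continuous_\<Psi> compact_Icc)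
    then have "bounded (range (\<lambda>r. \<Psi> g (clamp r)))"
      by (rule bounded_subset) (use clamp in auto)
    moreover have "continuous_on UNIV (\<lambda>r. \<Psi> g (clamp r))"
      unfolding clamp_def
      by (rule continuous_on_compose2[OF continuous_\<Psi>]) (use clamp[unfolded clamp_def] in \<open>auto intro!: continuous_intros\<close>)
    ultimately show ?thesis
      by (simp add: bcontfun_def)
  qed
  define T where "T g = Bcontfun (\<lambda>r. \<Psi> g (clamp r))" for g
  have T: "apply_bcontfun (T g) r = \<Psi> g (clamp r)" for g r
    unfolding T_def using Bcontfun_inverse[OF bcontfun_\<Psi>] by simp
  have "dist (T g1) (T g2) \<le> green_norm_bound t R * dist g1 g2" for g1 g2
  proof (rule dist_bound)
    fix r
    have "\<bar>apply_bcontfun g1 r' - apply_bcontfun g2 r'\<bar> \<le> dist g1 g2" for r'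
      using dist_bounded[of g1 r' g2] by (simp add: dist_real_def)
    then show "dist (T g1 r) (T g2 r) \<le> green_norm_bound t R * dist g1 g2"
      unfolding T \<Psi>_def dist_real_def using clamp[of r] R
      by (simp add: green_integral_contraction[OF t] continuous_on_apply_bcontfun)
  qed
  then obtain g where "T g = g"
    using banach_fix_type[OF green_norm_bound_nonneg green_norm_bound_less_1, of t R T] t R by auto
  then have "apply_bcontfun g r = h r + green_integral t R (apply_bcontfun g) r" if "r \<in> {0..R}" for r
    using T[of g r] that by (simp add: \<Psi>_def clamp_def)
  then show ?thesis
    by (intro exI[of _ "apply_bcontfun g"]) (auto intro: continuous_on_apply_bcontfun)
qed

section \<open>Fixed profiles\<close>

lemma conv_neum_eq_green_integral:
  assumes t: "0 < t" and R: "0 \<le> R" "R \<le> 1" and r: "r \<in> {0..1}"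
    and \<rho>: "continuous_on {0..R} \<rho>" and zero: "\<And>r'. r' \<in> {R<..1} \<Longrightarrow> \<rho> r' = 0"
  shows "conv_neum t (c, \<rho>) r = c * green_neum t r 0 + green_integral t R \<rho> r"
proof -
  have "((\<lambda>r'. green_neum t r r' * \<rho> r') has_integral green_integral t R \<rho> r) {0..R}"
    unfolding green_integral_def using integrable_green_neum_mult[OF t r order_refl R(2) \<rho>] by blast
  moreover have "((\<lambda>r'. green_neum t r r' * \<rho> r') has_integral 0) {R..1}"
    by (rule has_integral_spike_finite[where S="{R}" and f="\<lambda>_. 0"]) (use zero in auto)
  ultimately have "((\<lambda>r'. green_neum t r r' * \<rho> r') has_integral green_integral t R \<rho> r + 0) {0..1}"
    by (rule has_integral_combine[OF R])
  then show ?thesis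
    by (simp add: conv_neum_def integral_unique)
qed

lemma integral_conv_neum:
  assumes t: "0 < t" and R: "0 \<le> R" "R \<le> 1"
    and \<rho>: "continuous_on {0..R} \<rho>" and zero: "\<And>r'. r' \<in> {R<..1} \<Longrightarrow> \<rho> r' = 0"
  shows "integral {0..1} (conv_neum t (c, \<rho>)) = c + integral {0..R} \<rho>"
proof -
  have "continuous_on ({0..1} \<times> {0..R}) (\<lambda>y. green_neum t (fst y) (snd y) * \<rho> (snd y))"
    by (intro continuous_intros continuous_on_green_neum t continuous_on_compose2[OF \<rho>])
       (use R in auto)
  then have "continuous_on (cbox (0, 0) (1, R)) (\<lambda>(r, r'). green_neum t r r' * \<rho> r')"
    unfolding cbox_Pair_eq unfolding cbox_interval by (simp add: case_prod_beta)
  from integral_swap_continuous[OF this]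
  have swap: "integral {0..1} (green_integral t R \<rho>)
                = integral {0..R} (\<lambda>r'. integral {0..1} (\<lambda>r. green_neum t r r') * \<rho> r')"
    by (simp add: green_integral_def[abs_def] cbox_interval)
  have "integral {0..1} (conv_neum t (c, \<rho>))
          = integral {0..1} (\<lambda>r. c * green_neum t r 0 + green_integral t R \<rho> r)"
    using conv_neum_eq_green_integral[OF t R _ \<rho> zero] by (intro integral_cong) auto
  also have "\<dots> = c * integral {0..1} (\<lambda>r. green_neum t r 0) + integral {0..1} (green_integral t R \<rho>)"
    using integrable_green_neum_mult[OF t, of _ 0 1 "\<lambda>_. 1"]
    by (subst integral_add)
       (auto intro!: integrable_continuous_interval continuous_on_green_integral t R \<rho>
                     continuous_on_green_neum continuous_intros)
  also have "\<dots> = c + integral {0..R} \<rho>"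
    unfolding swap by (intro arg_cong2[where f="(+)"] integral_cong) (use R integral_green_neum[OF t] in auto)
  finally show ?thesis .
qed

lemma continuous_on_conv_neum:
  assumes t: "0 < t" and R: "0 \<le> R" "R \<le> 1"
    and \<rho>: "continuous_on {0..R} \<rho>" and zero: "\<And>r'. r' \<in> {R<..1} \<Longrightarrow> \<rho> r' = 0"
  shows "continuous_on {0..1} (conv_neum t (c, \<rho>))"
proof -
  have "continuous_on {0..1} (\<lambda>r. c * green_neum t r 0 + green_integral t R \<rho> r)"
    using R by (auto intro!: continuous_intros continuous_on_green_integral continuous_on_green_neum t \<rho>)
  then show ?thesis
    by (rule continuous_on_eq) (use conv_neum_eq_green_integral[OF t R _ \<rho> zero] in auto)
qed

lemma integral_conv_neum_tail:
  assumes t: "0 < t" and R: "0 \<le> R" "R \<le> 1"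
    and \<rho>: "continuous_on {0..R} \<rho>" and zero: "\<And>r'. r' \<in> {R<..1} \<Longrightarrow> \<rho> r' = 0"
    and fixed: "\<And>r. r \<in> {0..R} \<Longrightarrow> conv_neum t (c, \<rho>) r = \<rho> r"
  shows "integral {R..1} (conv_neum t (c, \<rho>)) = c"
proof -
  have "integral {0..R} (conv_neum t (c, \<rho>)) + integral {R..1} (conv_neum t (c, \<rho>))
          = integral {0..1} (conv_neum t (c, \<rho>))"
    using R continuous_on_conv_neum[OF t R \<rho> zero]
    by (intro Henstock_Kurzweil_Integration.integral_combine integrable_continuous_interval) auto
  moreover have "integral {0..R} (conv_neum t (c, \<rho>)) = integral {0..R} \<rho>"
    using fixed by (rule integral_cong)
  ultimately show ?thesis
    using integral_conv_neum[OF t R \<rho> zero] by simp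
qed

lemma cut_point_eqI:
  fixes F :: "real \<Rightarrow> real"
  assumes F: "F integrable_on {0..1}" and m: "0 < m" "\<And>r. r \<in> {0..1} \<Longrightarrow> m \<le> F r"
    and R: "R \<in> {0..1}" "integral {R..1} F = a"
  shows "cut_point a F = R"
  unfolding cut_point_def
proof (rule the_equality)
  have decreasing: "integral {v..1} F < integral {u..1} F" if "0 \<le> u" "u < v" "v \<le> 1" for u v
  proof -
    have "integral {u..v} F + integral {v..1} F = integral {u..1} F"
      using that integrable_on_subinterval[OF F, of u 1]
      by (intro Henstock_Kurzweil_Integration.integral_combine) auto
    moreover have "(v - u) * m \<le> integral {u..v} F"
      using integral_le[of "\<lambda>_. m" "{u..v}" F] integrable_on_subinterval[OF F, of u v] m that by auto
    moreover have "0 < (v - u) * m"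
      using that m by simp
    ultimately show ?thesis
      by linarith
  qed
  show "R \<in> {0..1} \<and> integral {R..1} F = a"
    using R by simp
  show "R' = R" if "R' \<in> {0..1} \<and> integral {R'..1} F = a" for R'
    using that R decreasing[of R' R] decreasing[of R R'] by (cases R' R rule: linorder_cases) auto
qed

lemma fixed_profile_solves:
  assumes t: "0 < t" and R: "0 \<le> R" "R \<le> 1" and fp: "fixed_profile j t R \<rho>" and r: "r \<in> {0..R}"
  shows "\<rho> r = j * t * green_neum t r 0 + green_integral t R \<rho> r"
proof -
  have "snd (S_minus j t (j * t, \<rho>)) r = \<rho> r" and "cut_point (j * t) (conv_neum t (j * t, \<rho>)) = R"
    using fp r R by (auto simp: fixed_profile_def)
  then have "\<rho> r = conv_neum t (j * t, \<rho>) r"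
    using r by (simp add: S_minus_def cut_paste_def)
  also have "\<dots> = j * t * green_neum t r 0 + green_integral t R \<rho> r"
    using fp r R by (intro conv_neum_eq_green_integral t) (auto simp: fixed_profile_def)
  finally show ?thesis .
qed

lemma fixed_profileI:
  assumes j: "0 < j" and t: "0 < t" and R: "0 < R" "R \<le> 1"
    and \<rho>: "continuous_on {0..R} \<rho>" and zero: "\<And>r. r \<in> {R<..1} \<Longrightarrow> \<rho> r = 0"
    and nonneg: "\<And>r. r \<in> {0..1} \<Longrightarrow> 0 \<le> \<rho> r"
    and solves: "\<And>r. r \<in> {0..R} \<Longrightarrow> \<rho> r = j * t * green_neum t r 0 + green_integral t R \<rho> r"
  shows "fixed_profile j t R \<rho>"
proof -
  define F where "F = conv_neum t (j * t, \<rho>)"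
  define m where "m = j * t * gauss_kernel t 1"
  have F: "F r = j * t * green_neum t r 0 + green_integral t R \<rho> r" if "r \<in> {0..1}" for r
    unfolding F_def using R that by (intro conv_neum_eq_green_integral t \<rho> zero) auto
  have F_integrable: "F integrable_on {0..1}"
    unfolding F_def using R
    by (intro integrable_continuous_interval continuous_on_conv_neum[OF t _ R(2) \<rho> zero]) auto
  have "0 < m"
    using j t gauss_kernel_pos[OF t] by (simp add: m_def)
  have F_ge: "m \<le> F r" if r: "r \<in> {0..1}" for r
  proof -
    have "green_integral t R (\<lambda>_. 0) r \<le> green_integral t R \<rho> r"
      using R r nonneg by (intro green_integral_mono t \<rho>) auto
    moreover have "m \<le> j * t * green_neum t r 0"
      unfolding m_def using j t r by (intro mult_left_mono green_neum_ge) auto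
    ultimately show ?thesis
      using F[OF r] by (simp add: green_integral_def)
  qed
  have F_eq: "F r = \<rho> r" if "r \<in> {0..R}" for r
    using F solves that R by auto
  have "R * m \<le> integral {0..R} F"
    using integral_le[of "\<lambda>_. m" "{0..R}" F] integrable_on_subinterval[OF F_integrable, of 0 R] F_ge R
    by auto
  also have "\<dots> = integral {0..R} \<rho>"
    using F_eq by (rule integral_cong)
  finally have "j * t < integral {0..1} F"
    using integral_conv_neum[OF t less_imp_le[OF R(1)] R(2) \<rho> zero, of "j * t"] \<open>0 < m\<close> R
    unfolding F_def by (smt (verit) mult_pos_pos)
  moreover have "cut_point (j * t) F = R"
    using R integral_conv_neum_tail[OF t _ R(2) \<rho> zero, of "j * t"] F_eq
    by (intro cut_point_eqI[OF F_integrable \<open>0 < m\<close> F_ge]) (auto simp: F_def)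
  ultimately show ?thesis
    using R nonneg \<rho> zero F_eq
    unfolding fixed_profile_def S_minus_def cut_paste_def F_def[symmetric] by auto
qed

lemma fixed_profile_mono:
  assumes t: "0 < t" and R: "0 \<le> R1" "R1 \<le> R2" "R2 < 1"
    and fp1: "fixed_profile j t R1 \<rho>1" and fp2: "fixed_profile j t R2 \<rho>2"
    and r: "r \<in> {0..1}"
  shows "\<rho>1 r \<le> \<rho>2 r"
proof (cases "r \<le> R1")
  case True
  have \<rho>1: "continuous_on {0..R1} \<rho>1" and \<rho>2: "continuous_on {0..R2} \<rho>2"
    and nonneg2: "\<And>r. r \<in> {0..1} \<Longrightarrow> 0 \<le> \<rho>2 r"
    using fp1 fp2 by (auto simp: fixed_profile_def)
  have \<rho>2': "continuous_on {0..R1} \<rho>2"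
    using continuous_on_subset[OF \<rho>2] R by auto
  have "green_integral t R1 (\<lambda>r. \<rho>2 r - \<rho>1 r) x \<le> \<rho>2 x - \<rho>1 x" if x: "x \<in> {0..R1}" for x
  proof -
    have x': "x \<in> {0..1}"
      using x R by auto
    have "green_integral t R1 \<rho>2 x \<le> green_integral t R2 \<rho>2 x"
      using R nonneg2 by (intro green_integral_mono_interval t x' \<rho>2) auto
    then show ?thesis
      using fixed_profile_solves[OF t _ _ fp1 x] fixed_profile_solves[OF t _ _ fp2, of x] x R
        green_integral_diff[OF t _ x' \<rho>2' \<rho>1]
      by auto
  qed
  then have "0 \<le> \<rho>2 r - \<rho>1 r"
    using True r R by (intro green_supersolution_nonneg[OF t _ _ continuous_on_diff[OF \<rho>2' \<rho>1]]) auto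
  then show ?thesis
    by simp
next
  case False
  then show ?thesis
    using fp1 fp2 r by (auto simp: fixed_profile_def)
qed

lemma exists_fixed_profile:
  assumes j: "0 < j" and t: "0 < t" and R: "0 < R" "R < 1"
  shows "\<exists>\<rho>. fixed_profile j t R \<rho>"
proof -
  have "continuous_on {0..R} (\<lambda>r. j * t * green_neum t r 0)"
    using R by (auto intro!: continuous_intros continuous_on_green_neum t)
  from exists_green_fixed_point[OF t _ R(2) this] R
  obtain g where g: "continuous_on {0..R} g"
    and solves: "\<And>r. r \<in> {0..R} \<Longrightarrow> g r = j * t * green_neum t r 0 + green_integral t R g r"
    by auto
  have "0 \<le> g r" if "r \<in> {0..R}" for r
  proof (rule green_supersolution_nonneg[OF t _ R(2) g _ that])
    fix r assume "r \<in> {0..R}"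
    moreover have "0 \<le> j * t * green_neum t r 0"
      using j t green_neum_nonneg[OF t] by simp
    ultimately show "green_integral t R g r \<le> g r"
      using solves by fastforce
  qed (use R in auto)
  define \<rho> where "\<rho> r = (if r \<le> R then g r else 0)" for r
  have "green_integral t R \<rho> = green_integral t R g"
    unfolding green_integral_def \<rho>_def by (intro ext integral_cong) auto
  then have "fixed_profile j t R \<rho>"
    using R g solves \<open>\<And>r. r \<in> {0..R} \<Longrightarrow> 0 \<le> g r\<close>
    by (intro fixed_profileI j t) (auto simp: \<rho>_def intro: continuous_on_eq)
  then show ?thesis
    by blast
qed

lemma fixed_profile_unique:
  assumes "0 < t" "0 < R" "R < 1" "fixed_profile j t R \<rho>" "fixed_profile j t R \<rho>'" "r \<in> {0..1}"
  shows "\<rho>' r = \<rho> r"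
  using fixed_profile_mono[of t R R j \<rho> \<rho>' r] fixed_profile_mono[of t R R j \<rho>' \<rho> r] assms by simp

theorem theorem3p1:
  fixes j :: real
  assumes "j > 0"
  shows "(\<forall>R\<in>{0<..<1}. \<exists>\<delta>0>0. \<forall>\<delta>. 0 < \<delta> \<and> \<delta> < \<delta>0 \<longrightarrow>
            (\<exists>\<rho>. fixed_profile j \<delta> R \<rho> \<and>
                 (\<forall>\<rho>'. fixed_profile j \<delta> R \<rho>' \<longrightarrow> (\<forall>r\<in>{0..1}. \<rho>' r = \<rho> r))))
       \<and> (\<forall>R1\<in>{0<..<1}. \<forall>R2\<in>{0<..<1}. R1 \<le> R2 \<longrightarrow>
            (\<exists>\<delta>0>0. \<forall>\<delta>. 0 < \<delta> \<and> \<delta> < \<delta>0 \<longrightarrow>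
              (\<forall>\<rho>1 \<rho>2. fixed_profile j \<delta> R1 \<rho>1 \<longrightarrow> fixed_profile j \<delta> R2 \<rho>2 \<longrightarrow>
                 (\<forall>r\<in>{0..1}. \<rho>1 r \<le> \<rho>2 r))))"
proof (intro conjI ballI impI)
  fix R :: real
  assume R: "R \<in> {0<..<1}"
  show "\<exists>\<delta>0>0. \<forall>\<delta>. 0 < \<delta> \<and> \<delta> < \<delta>0 \<longrightarrow>
      (\<exists>\<rho>. fixed_profile j \<delta> R \<rho> \<and> (\<forall>\<rho>'. fixed_profile j \<delta> R \<rho>' \<longrightarrow> (\<forall>r\<in>{0..1}. \<rho>' r = \<rho> r)))"
  proof (intro exI[of _ 1] conjI allI impI)
    fix \<delta> :: real
    assume "0 < \<delta> \<and> \<delta> < 1"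
    then obtain \<rho> where fp: "fixed_profile j \<delta> R \<rho>"
      using exists_fixed_profile[OF assms] R by auto
    have "\<forall>\<rho>'. fixed_profile j \<delta> R \<rho>' \<longrightarrow> (\<forall>r\<in>{0..1}. \<rho>' r = \<rho> r)"
      using fixed_profile_unique[OF _ _ _ fp] R \<open>0 < \<delta> \<and> \<delta> < 1\<close> by simp
    with fp show "\<exists>\<rho>. fixed_profile j \<delta> R \<rho> \<and> (\<forall>\<rho>'. fixed_profile j \<delta> R \<rho>' \<longrightarrow> (\<forall>r\<in>{0..1}. \<rho>' r = \<rho> r))"
      by blast
  qed simp
next
  fix R1 R2 :: real
  assume R: "R1 \<in> {0<..<1}" "R2 \<in> {0<..<1}" "R1 \<le> R2"
  show "\<exists>\<delta>0>0. \<forall>\<delta>. 0 < \<delta> \<and> \<delta> < \<delta>0 \<longrightarrow>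
      (\<forall>\<rho>1 \<rho>2. fixed_profile j \<delta> R1 \<rho>1 \<longrightarrow> fixed_profile j \<delta> R2 \<rho>2 \<longrightarrow> (\<forall>r\<in>{0..1}. \<rho>1 r \<le> \<rho>2 r))"
  proof (intro exI[of _ 1] conjI allI impI ballI)
    fix \<delta> r :: real and \<rho>1 \<rho>2 :: "real \<Rightarrow> real"
    assume "0 < \<delta> \<and> \<delta> < 1" and fp: "fixed_profile j \<delta> R1 \<rho>1" "fixed_profile j \<delta> R2 \<rho>2"
      and "r \<in> {0..1}"
    then show "\<rho>1 r \<le> \<rho>2 r"
      using R fixed_profile_mono[of \<delta> R1 R2, OF _ _ _ _ fp] by simp
  qed simp
qed

end
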